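(* Let $\alpha,\beta\in\mathbb{R}$ satisfy $4<\alpha^2<6$ and $\frac{4}{100}<\beta<\frac{165}{100}$, and let $q_{\alpha,\beta}(w)=w^4+\alpha w^3+(\beta-4)w^2-\alpha w+3$ for $w\in\mathbb{C}$. Then $q_{\alpha,\beta}$ has $4$ pairwise different roots, exactly $2$ of which are real, and the remaining $2$ are non-real and complex conjugate to each other. *)

theory Defs
  imports Complex_Main "HOL-Computational_Algebra.Polynomial"
begin

definition q_ab :: "real \<Rightarrow> real \<Rightarrow> complex poly" where
  "q_ab \<alpha> \<beta> = [: 3, - complex_of_real \<alpha>, complex_of_real (\<beta> - 4), complex_of_real \<alpha>, 1 :]"

end

theory Submission
  imports Defs
begin

text \<open>Since q_{-alpha,beta}(w) = q_{alpha,beta}(-w) we may assume alpha > 2. The real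
  quartic then changes sign on [-4,-2] and on [-2,-1], giving two real roots r1 < -2 < r2 < -1,
  and it is positive on [-1,infinity). Dividing out (x - r1)(x - r2) leaves a real monic quadratic
  x^2 + u x + v with u = alpha + r1 + r2 < 0; were its discriminant nonnegative, its larger root
  would be positive and hence a positive root of the quartic. So the quadratic contributes a pair
  of non-real conjugate roots.\<close>

definition q_real :: "real \<Rightarrow> real \<Rightarrow> real \<Rightarrow> real" where
  "q_real a b x = x^4 + a*x^3 + (b-4)*x^2 - a*x + 3"

lemma poly_q_ab:
  "poly (q_ab a b) w = w^4 + of_real a * w^3 + of_real (b - 4) * w^2 + of_real (-a) * w + 3"
  by (simp add: q_ab_def algebra_simps power2_eq_square power3_eq_cube power4_eq_xxxx)

lemma poly_q_ab_uminus: "poly (q_ab (-a) b) w = poly (q_ab a b) (-w)"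
  by (simp add: poly_q_ab power3_eq_cube power4_eq_xxxx)

lemma less_24495_if_square_less_6:
  fixes a :: real
  assumes "a^2 < 6"
  shows "a < 24495/10000"
proof (rule ccontr)
  assume "\<not> a < 24495/10000"
  then have "(24495/10000::real)^2 \<le> a^2" by (intro power_mono) auto
  then show False using assms by (simp add: power2_eq_square)
qed

lemma q_real_pos_unit_interval:
  assumes "0 < x" "x < 1" "a^2 < 6" "4/100 \<le> b"
  shows "q_real a b x > 0"
proof -
  define c :: real where "c = 24495/10000"
  have "a < c" unfolding c_def using assms(3) by (rule less_24495_if_square_less_6)
  \<comment> \<open>The extremal case a = c, b = 4/100, which is nearly tight at x = 0.945.\<close>
  have extremal: "x^4 + c*x^3 - 396/100*x^2 - c*x + 3
      = (x - 945/1000)^2 * (x^2 + 8679/2000*x + 334863/100000)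
        + (330297/80000000*x + 38358777/4000000000)"
    unfolding c_def by (simp add: field_simps power2_eq_square power3_eq_cube power4_eq_xxxx)
  have "(x - 945/1000)^2 * (x^2 + 8679/2000*x + 334863/100000) \<ge> 0"
    using assms by (intro mult_nonneg_nonneg) auto
  moreover have "330297/80000000*x + 38358777/4000000000 > 0" using assms by simp
  ultimately have extremal_pos: "x^4 + c*x^3 - 396/100*x^2 - c*x + 3 > 0"
    using extremal by linarith
  have "x^3 \<le> x" using assms by (simp add: power3_eq_cube mult_le_one)
  then have "(c - a) * (x - x^3) \<ge> 0" using \<open>a < c\<close> by simp
  moreover have "(b - 4/100) * x^2 \<ge> 0" using assms by simp
  moreover have "q_real a b x = (x^4 + c*x^3 - 396/100*x^2 - c*x + 3)
      + (c - a) * (x - x^3) + (b - 4/100) * x^2"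
    by (simp add: q_real_def algebra_simps)
  ultimately show ?thesis using extremal_pos by linarith
qed

lemma q_real_pos_ge_minus_one:
  assumes "-1 \<le> x" "2 \<le> a" "a^2 < 6" "4/100 \<le> b"
  shows "q_real a b x > 0"
proof -
  have split: "q_real a b x = (x^2 - 1) * (x^2 + a*x - 3) + b*x^2"
    by (simp add: q_real_def algebra_simps power2_eq_square power3_eq_cube power4_eq_xxxx)
  consider "1 \<le> x" | "x = 0" | "x < 0" | "0 < x \<and> x < 1" using assms by linarith
  then show ?thesis
  proof cases
    case 1
    then have "x^2 \<ge> 1" "a*x \<ge> a" using assms by (simp_all add: one_le_power)
    then have "x^2 - 1 \<ge> 0" "x^2 + a*x - 3 \<ge> 0" using assms by linarith+
    then have "(x^2 - 1) * (x^2 + a*x - 3) \<ge> 0" by simp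
    moreover have "b*x^2 > 0" using 1 assms by simp
    ultimately show ?thesis using split by linarith
  next
    case 2
    then show ?thesis by (simp add: q_real_def)
  next
    case 3
    then have "x^2 \<le> 1" "a*x < 0" using assms by (simp_all add: abs_square_le_1 mult_pos_neg)
    then have "(x^2 - 1) * (x^2 + a*x - 3) \<ge> 0" by (simp add: mult_nonpos_nonpos)
    moreover have "b*x^2 > 0" using 3 assms by simp
    ultimately show ?thesis using split by linarith
  next
    case 4
    then show ?thesis using q_real_pos_unit_interval assms by simp
  qed
qed

lemma q_real_two_negative_roots:
  assumes "2 < a" "a^2 < 6" "0 < b" "b \<le> 9/4"
  obtains r1 r2 where "r1 < -2" "-2 < r2" "r2 < -1" "q_real a b r1 = 0" "q_real a b r2 = 0"
proof -
  have "a < 24495/10000" using assms(2) by (rule less_24495_if_square_less_6)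
  then have at_m4: "q_real a b (-4) > 0" and at_m2: "q_real a b (-2) < 0"
    and at_m1: "q_real a b (-1) > 0"
    using assms by (simp_all add: q_real_def)
  have cont: "continuous_on S (q_real a b)" for S
    unfolding q_real_def by (intro continuous_intros)
  obtain r1 where r1: "-4 \<le> r1" "r1 \<le> -2" "q_real a b r1 = 0"
    using IVT2'[of "q_real a b" "-2" 0 "-4", OF _ _ _ cont] at_m4 at_m2 by auto
  obtain r2 where r2: "-2 \<le> r2" "r2 \<le> -1" "q_real a b r2 = 0"
    using IVT'[of "q_real a b" "-2" 0 "-1", OF _ _ _ cont] at_m2 at_m1 by auto
  have "r1 < -2" "-2 < r2" "r2 < -1" using r1 r2 at_m2 at_m1 by (auto simp: order.order_iff_strict)
  from this r1(3) r2(3) show ?thesis by (rule that)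
qed

lemma monic_quartic_factor_two_roots:
  fixes c3 c2 c1 c0 r1 r2 x :: "'a::idom"
  assumes "r1 \<noteq> r2"
    and "r1^4 + c3*r1^3 + c2*r1^2 + c1*r1 + c0 = 0"
    and "r2^4 + c3*r2^3 + c2*r2^2 + c1*r2 + c0 = 0"
  shows "x^4 + c3*x^3 + c2*x^2 + c1*x + c0
    = (x - r1) * (x - r2) * (x^2 + (c3 + r1 + r2)*x + (c2 + (r1 + r2)*(c3 + r1 + r2) - r1*r2))"
proof -
  define u v where "u = c3 + r1 + r2" and "v = c2 + (r1 + r2)*u - r1*r2"
  define k l where "k = c1 - r1*r2*u + (r1 + r2)*v" and "l = c0 - r1*r2*v"
  have division: "y^4 + c3*y^3 + c2*y^2 + c1*y + c0 = (y - r1) * (y - r2) * (y^2 + u*y + v) + (k*y + l)"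
    for y
    unfolding u_def v_def k_def l_def
    by (simp add: algebra_simps power2_eq_square power3_eq_cube power4_eq_xxxx)
  have "k*r1 + l = 0" "k*r2 + l = 0"
    using division[of r1] division[of r2] assms(2,3) by simp_all
  then have "k*r1 = k*r2" by (metis add_right_cancel)
  with assms(1) have "k = 0" by simp
  with \<open>k*r1 + l = 0\<close> have "l = 0" by simp
  show ?thesis using division[of x] \<open>k = 0\<close> \<open>l = 0\<close> by (simp add: u_def v_def)
qed

lemma real_quadratic_conjugate_roots:
  fixes u v :: real
  assumes "u^2 < 4*v"
  obtains z where "z \<notin> \<real>" "\<And>w. w^2 + of_real u * w + of_real v = (w - z) * (w - cnj z)"
proof
  define z where "z = Complex (-u/2) (sqrt (4*v - u^2) / 2)"
  show "z \<notin> \<real>" using assms by (simp add: z_def complex_is_Real_iff)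
  have "z + cnj z = - of_real u" by (simp add: z_def complex_eq_iff)
  moreover have "z * cnj z = of_real v"
    using assms by (simp add: z_def complex_eq_iff power2_eq_square field_simps)
  moreover have "(w - z) * (w - cnj z) = w^2 - (z + cnj z) * w + z * cnj z" for w
    by (simp add: algebra_simps power2_eq_square)
  ultimately show "w^2 + of_real u * w + of_real v = (w - z) * (w - cnj z)" for w
    by simp
qed

lemma q_ab_factorization_pos:
  assumes "2 < a" "a^2 < 6" "4/100 < b" "b \<le> 9/4"
  obtains r1 r2 :: real and z where "r1 \<noteq> r2" "z \<notin> \<real>"
    "\<And>w. poly (q_ab a b) w = (w - of_real r1) * (w - of_real r2) * (w - z) * (w - cnj z)"
proof -
  have "0 < b" using assms(3) by simp
  obtain r1 r2 where r: "r1 < -2" "-2 < r2" "r2 < -1" "q_real a b r1 = 0" "q_real a b r2 = 0"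
    using q_real_two_negative_roots[OF assms(1,2) \<open>0 < b\<close> assms(4)] by blast
  define u v where "u = a + r1 + r2" and "v = (b - 4) + (r1 + r2)*u - r1*r2"
  have real_factor: "q_real a b x = (x - r1) * (x - r2) * (x^2 + u*x + v)" for x
    using monic_quartic_factor_two_roots[of r1 r2 a "b - 4" "-a" 3 x] r
    by (simp add: q_real_def u_def v_def)
  have "u < 0" using r less_24495_if_square_less_6[OF assms(2)] by (simp add: u_def)
  have "u^2 < 4*v"
  proof (rule ccontr)
    assume "\<not> u^2 < 4*v"
    define x where "x = (-u + sqrt (u^2 - 4*v)) / 2"
    have "x^2 + u*x + v = 0"
      using \<open>\<not> u^2 < 4*v\<close> by (simp add: x_def field_simps power2_eq_square)
    then have "q_real a b x = 0" by (simp add: real_factor)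
    moreover have "x > 0"
    proof -
      have "0 \<le> sqrt (u^2 - 4*v)" using \<open>\<not> u^2 < 4*v\<close> by simp
      with \<open>u < 0\<close> show ?thesis unfolding x_def by (intro divide_pos_pos) linarith+
    qed
    ultimately show False using q_real_pos_ge_minus_one[of x a b] assms by simp
  qed
  then obtain z where z: "z \<notin> \<real>" "\<And>w. w^2 + of_real u * w + of_real v = (w - z) * (w - cnj z)"
    using real_quadratic_conjugate_roots by blast
  have "poly (q_ab a b) w = (w - of_real r1) * (w - of_real r2) * (w - z) * (w - cnj z)" for w
  proof -
    have root: "(of_real r)^4 + of_real a * (of_real r)^3 + of_real (b - 4) * (of_real r)^2
        + of_real (-a) * of_real r + 3 = (0::complex)" if "q_real a b r = 0" for r
      using arg_cong[OF that, of complex_of_real] by (simp add: q_real_def)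
    have "poly (q_ab a b) w
        = (w - of_real r1) * (w - of_real r2) * (w^2 + of_real u * w + of_real v)"
      using monic_quartic_factor_two_roots[of "of_real r1" "of_real r2", OF _ root root] r
      by (simp add: poly_q_ab u_def v_def)
    then show ?thesis by (simp add: z(2) mult.assoc)
  qed
  moreover have "r1 \<noteq> r2" using r by simp
  ultimately show ?thesis using z(1) that by blast
qed

lemma q_ab_factorization:
  assumes "4 < a^2" "a^2 < 6" "4/100 < b" "b \<le> 9/4"
  obtains r1 r2 :: real and z where "r1 \<noteq> r2" "z \<notin> \<real>"
    "\<And>w. poly (q_ab a b) w = (w - of_real r1) * (w - of_real r2) * (w - z) * (w - cnj z)"
proof -
  have "2 < \<bar>a\<bar>" using assms(1) abs_le_square_iff[of a 2] by simp
  then obtain r1 r2 :: real and z where r: "r1 \<noteq> r2" "z \<notin> \<real>"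
    and factor: "\<And>w. poly (q_ab \<bar>a\<bar> b) w = (w - of_real r1) * (w - of_real r2) * (w - z) * (w - cnj z)"
    using q_ab_factorization_pos[of "\<bar>a\<bar>" b] assms by auto
  show ?thesis
  proof (cases "0 \<le> a")
    case True
    then show ?thesis using that r factor by simp
  next
    case False
    have "poly (q_ab a b) w = (w - of_real (-r1)) * (w - of_real (-r2)) * (w - -z) * (w - cnj (-z))"
      for w
    proof -
      have "poly (q_ab a b) w = poly (q_ab \<bar>a\<bar> b) (-w)"
        using False poly_q_ab_uminus[of "\<bar>a\<bar>" b w] by simp
      also have "\<dots> = (w - of_real (-r1)) * (w - of_real (-r2)) * (w - -z) * (w - cnj (-z))"
        unfolding factor by (simp add: algebra_simps)
      finally show ?thesis .
    qed
    moreover have "-r1 \<noteq> -r2" "-z \<notin> \<real>" using r by (auto simp: complex_is_Real_iff)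
    ultimately show ?thesis using that by blast
  qed
qed

lemma roots_two_real_and_conjugate_pair:
  fixes f :: "complex \<Rightarrow> complex" and r1 r2 :: real
  assumes "r1 \<noteq> r2" "z \<notin> \<real>"
    and "\<And>w. f w = (w - of_real r1) * (w - of_real r2) * (w - z) * (w - cnj z)"
  shows "card {w. f w = 0} = 4" and "card {w. f w = 0 \<and> w \<in> \<real>} = 2"
    and "{w. f w = 0 \<and> w \<notin> \<real>} = {z, cnj z}"
proof -
  have "cnj z \<notin> \<real>" "z \<noteq> cnj z" using assms(2) by (auto simp: complex_is_Real_iff complex_eq_iff)
  moreover have "of_real r \<noteq> z" "of_real r \<noteq> cnj z" for r
    using assms(2) \<open>cnj z \<notin> \<real>\<close> by (metis Reals_of_real)+
  ultimately have "{w. f w = 0} = {of_real r1, of_real r2, z, cnj z}"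
    and "{w. f w = 0 \<and> w \<in> \<real>} = {of_real r1, of_real r2}"
    and "{w. f w = 0 \<and> w \<notin> \<real>} = {z, cnj z}"
    using assms by auto
  with \<open>z \<noteq> cnj z\<close> \<open>\<And>r. of_real r \<noteq> z\<close> \<open>\<And>r. of_real r \<noteq> cnj z\<close> assms(1)
  show "card {w. f w = 0} = 4" "card {w. f w = 0 \<and> w \<in> \<real>} = 2"
    "{w. f w = 0 \<and> w \<notin> \<real>} = {z, cnj z}"
    by (simp_all add: card_insert_if)
qed

theorem mainTheorem2:
  fixes \<alpha> \<beta> :: real
  assumes "4 < \<alpha>^2" and "\<alpha>^2 < 6"
    and "4/100 < \<beta>" and "\<beta> < 165/100"
  shows "card {w. poly (q_ab \<alpha> \<beta>) w = 0} = 4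
    \<and> card {w. poly (q_ab \<alpha> \<beta>) w = 0 \<and> w \<in> \<real>} = 2
    \<and> (\<exists>z. z \<notin> \<real> \<and> {w. poly (q_ab \<alpha> \<beta>) w = 0 \<and> w \<notin> \<real>} = {z, cnj z})"
proof -
  obtain r1 r2 :: real and z where "r1 \<noteq> r2" "z \<notin> \<real>"
    "\<And>w. poly (q_ab \<alpha> \<beta>) w = (w - of_real r1) * (w - of_real r2) * (w - z) * (w - cnj z)"
    using q_ab_factorization[of \<alpha> \<beta>] assms by auto
  from roots_two_real_and_conjugate_pair[OF this] \<open>z \<notin> \<real>\<close> show ?thesis by blast
qed

end
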